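(* Let $\mathcal{A}$ be a collection of pairwise non-parallel hyperplanes in $Q=S_1\times\cdots\times S_n$, let $0\le a\le n$, let $\mathbb{P}_a$ be a probability measure on $Q_a$, let $\delta_{a+1},\dots,\delta_n\in[0,1/2]$, and let $\mathbb{P}_k$, $\alpha_k$ be defined as in the context. Then for every $a<k\le n$ and every $t\in\mathbb{N}$, $$\mathbb{E}_{k-1}\big[\alpha_k(x)^t\big]\le\frac{1}{|S_k|^t}\sum_{F_1,\dots,F_t\in\mathcal{N}_k} c\big((F_1\cup\cdots\cup F_t)\cap[a]\big)\cdot\nu\big((F_1\cup\cdots\cup F_t)\cap[a+1,k-1]\big).$$
   Context: $S_1,\dots,S_n$ are finite sets each with at least two elements; $Q_k = S_1\times\cdots\times S_k$. A hyperplane is $A = A_1\times\cdots\times A_n\subseteq Q$ with each $A_k$ either $S_k$ or a singleton in $S_k$; $F(A)=\{k: A_k\text{ is a singleton}\}$; hyperplanes are parallel if they have the same $F$. Hyperplanes in $\mathcal{A}$ have non-empty $F(A)$; write $\mathcal{A}=\{A_F:F\in\mathcal{F}\}$. A set $X\subseteq Q_k$ is identified with $X\times S_{k+1}\times\cdots\times S_n$; a hyperplane with $F(A)\subseteq[k]$ is viewed as a subset of $Q_k$. Let $\mathcal{F}_k=\{F\in\mathcal{F}:F\subseteq[k]\}$, $\mathcal{N}_k=\mathcal{F}_k\setminus\mathcal{F}_{k-1}$, $B_k=\bigcup_{F\in\mathcal{N}_k}A_F\subseteq Q_k$. For $k>a$, given $\mathbb{P}_{k-1}$ on $Q_{k-1}$,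 let $\alpha_k(x)=|\{y\in S_k:(x,y)\in B_k\}|/|S_k|$ for $x\in Q_{k-1}$, and define $\mathbb{P}_k(x,y)=\max\{0,\frac{\alpha_k(x)-\delta_k}{\alpha_k(x)(1-\delta_k)}\}\frac{\mathbb{P}_{k-1}(x)}{|S_k|}$ if $(x,y)\in B_k$ and $\mathbb{P}_k(x,y)=\min\{\frac{1}{1-\alpha_k(x)},\frac{1}{1-\delta_k}\}\frac{\mathbb{P}_{k-1}(x)}{|S_k|}$ otherwise. $\mathbb{E}_{k-1}$ is expectation over $x\sim\mathbb{P}_{k-1}$. For $I\subseteq[a]$, $c(I)=\max\{\mathbb{P}_a(H):H\text{ a hyperplane in }Q_a\text{ with }F(H)=I\}$ (so $c(\emptyset)=1$); for $J\subseteq[a+1,n]$, $\nu(J)=\prod_{j\in J}\frac{1}{(1-\delta_j)|S_j|}$ (so $\nu(\emptyset)=1$). *)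

theory Defs
  imports Complex_Main "HOL-Library.FuncSet"
begin

definition Qk :: "(nat \<Rightarrow> 'a set) \<Rightarrow> nat \<Rightarrow> (nat \<Rightarrow> 'a) set" where
  "Qk S k = PiE {1..k} S"

definition hyp :: "(nat \<Rightarrow> 'a set) \<Rightarrow> nat \<Rightarrow> nat set \<Rightarrow> (nat \<Rightarrow> 'a) \<Rightarrow> (nat \<Rightarrow> 'a) set" where
  "hyp S k F w = {x \<in> Qk S k. \<forall>i\<in>F. x i = w i}"

definition Nk :: "nat set set \<Rightarrow> nat \<Rightarrow> nat set set" where
  "Nk \<F> k = {F \<in> \<F>. F \<subseteq> {1..k} \<and> \<not> F \<subseteq> {1..k-1}}"

text \<open>B_k: union of A_F over F in N_k; A_F is the hyperplane with F(A_F)=F and values v F.\<close>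
definition Bk :: "(nat \<Rightarrow> 'a set) \<Rightarrow> nat set set \<Rightarrow> (nat set \<Rightarrow> nat \<Rightarrow> 'a) \<Rightarrow> nat \<Rightarrow> (nat \<Rightarrow> 'a) set" where
  "Bk S \<F> v k = (\<Union>F\<in>Nk \<F> k. hyp S k F (v F))"

definition alpha :: "(nat \<Rightarrow> 'a set) \<Rightarrow> nat set set \<Rightarrow> (nat set \<Rightarrow> nat \<Rightarrow> 'a) \<Rightarrow> nat \<Rightarrow> (nat \<Rightarrow> 'a) \<Rightarrow> real" where
  "alpha S \<F> v k x = real (card {y \<in> S k. x(k := y) \<in> Bk S \<F> v k}) / real (card (S k))"

text \<open>The measures P_k (as probability mass functions on Q_k); P_k = P_a for k \<le> a.\<close>
primrec Pk :: "(nat \<Rightarrow> 'a set) \<Rightarrow> nat set set \<Rightarrow> (nat set \<Rightarrow> nat \<Rightarrow> 'a) \<Rightarrow> (nat \<Rightarrow> real) \<Rightarrow> nat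
    \<Rightarrow> ((nat \<Rightarrow> 'a) \<Rightarrow> real) \<Rightarrow> nat \<Rightarrow> ((nat \<Rightarrow> 'a) \<Rightarrow> real)" where
  "Pk S \<F> v \<delta> a Pa 0 = Pa"
| "Pk S \<F> v \<delta> a Pa (Suc j) =
     (if Suc j \<le> a then Pa else
      (\<lambda>z. let x = restrict z {1..j}; al = alpha S \<F> v (Suc j) x in
         (if z \<in> Bk S \<F> v (Suc j)
          then max 0 ((al - \<delta> (Suc j)) / (al * (1 - \<delta> (Suc j))))
          else min (1 / (1 - al)) (1 / (1 - \<delta> (Suc j))))
         * Pk S \<F> v \<delta> a Pa j x / real (card (S (Suc j)))))"

definition cI :: "(nat \<Rightarrow> 'a set) \<Rightarrow> nat \<Rightarrow> ((nat \<Rightarrow> 'a) \<Rightarrow> real) \<Rightarrow> nat set \<Rightarrow> real" where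
  "cI S a Pa I = Max ((\<lambda>w. \<Sum>x\<in>hyp S a I w. Pa x) ` PiE I S)"

definition nu :: "(nat \<Rightarrow> 'a set) \<Rightarrow> (nat \<Rightarrow> real) \<Rightarrow> nat set \<Rightarrow> real" where
  "nu S \<delta> J = (\<Prod>j\<in>J. 1 / ((1 - \<delta> j) * real (card (S j))))"

end

theory Submission
  imports Defs
begin

(*
  For x in Q_(k-1), every F in N_k contains k, so A_F meets the fibre of x in at most the single
  point y = v_F(k), and only if x lies on the hyperplane fixing the coordinates F - {k}. Hence
  alpha_k(x) is at most 1/|S_k| times a sum of indicators over N_k, and expanding its t-th power
  gives a sum over t-tuples (F_1, ..., F_t) of indicators of intersections of such hyperplanes;
  each intersection lies in a hyperplane H fixing U = (F_1 u ... u F_t) - {k}.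

  It remains to show P_(k-1)(H) <= c(U n [a]) nu(U n [a+1, k-1]), by induction from P_a. Passing
  from P_(j-1) to P_j, a fixed coordinate j costs at most the factor 1/((1 - delta_j) |S_j|), since
  every P_j(x, y) is at most that fraction of P_(j-1)(x), while a free coordinate costs nothing,
  since the weights in the definition of P_j average to at most 1 over the fibre of x.

  The normalisation of P_a and the hypotheses on the family and its values are not needed, and
  delta_j < 1 suffices in place of delta_j <= 1/2.
*)

lemma Qk_Suc: "Qk S (Suc j) = (\<lambda>(y, x). x(Suc j := y)) ` (S (Suc j) \<times> Qk S j)"
  unfolding Qk_def using PiE_insert_eq[of "Suc j" "{1..j}" S]
  by (simp add: atLeastAtMostSuc_conv)

lemma inj_on_fun_upd_Qk: "inj_on (\<lambda>(y, x). x(Suc j := y)) (S (Suc j) \<times> Qk S j)"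
  unfolding Qk_def by (rule inj_combinator) simp

lemma restrict_fun_upd_Qk: "x \<in> Qk S j \<Longrightarrow> restrict (x(Suc j := y)) {1..j} = x"
  unfolding Qk_def by (auto simp: restrict_def PiE_def extensional_def fun_eq_iff)

lemma hyp_subset_Qk: "hyp S j U w \<subseteq> Qk S j"
  unfolding hyp_def by auto

lemma fun_upd_in_hyp_Suc_iff:
  assumes "x \<in> Qk S j" "y \<in> S (Suc j)"
  shows "x(Suc j := y) \<in> hyp S (Suc j) U w \<longleftrightarrow>
    x \<in> hyp S j (U - {Suc j}) w \<and> (Suc j \<in> U \<longrightarrow> y = w (Suc j))"
proof -
  have "x(Suc j := y) \<in> Qk S (Suc j)" using assms unfolding Qk_Suc by auto
  then show ?thesis using assms unfolding hyp_def by auto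
qed

lemma hyp_Suc:
  "hyp S (Suc j) U w = (\<lambda>(y, x). x(Suc j := y)) `
     ({y \<in> S (Suc j). Suc j \<in> U \<longrightarrow> y = w (Suc j)} \<times> hyp S j (U - {Suc j}) w)"
proof (intro equalityI subsetI)
  fix z assume z: "z \<in> hyp S (Suc j) U w"
  then obtain y x where yx: "z = x(Suc j := y)" "y \<in> S (Suc j)" "x \<in> Qk S j"
    using hyp_subset_Qk[of S "Suc j" U w] unfolding Qk_Suc by auto
  with z show "z \<in> (\<lambda>(y, x). x(Suc j := y)) `
     ({y \<in> S (Suc j). Suc j \<in> U \<longrightarrow> y = w (Suc j)} \<times> hyp S j (U - {Suc j}) w)"
    by (intro image_eqI[of _ _ "(y, x)"]) (simp_all add: fun_upd_in_hyp_Suc_iff)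
next
  fix z assume "z \<in> (\<lambda>(y, x). x(Suc j := y)) `
     ({y \<in> S (Suc j). Suc j \<in> U \<longrightarrow> y = w (Suc j)} \<times> hyp S j (U - {Suc j}) w)"
  then show "z \<in> hyp S (Suc j) U w"
    using hyp_subset_Qk by (force simp: fun_upd_in_hyp_Suc_iff)
qed

lemma sum_hyp_Suc:
  "(\<Sum>z\<in>hyp S (Suc j) U w. g z) =
   (\<Sum>x\<in>hyp S j (U - {Suc j}) w. \<Sum>y\<in>{y \<in> S (Suc j). Suc j \<in> U \<longrightarrow> y = w (Suc j)}.
      g (x(Suc j := y)))"
proof -
  let ?Y = "{y \<in> S (Suc j). Suc j \<in> U \<longrightarrow> y = w (Suc j)}"
  have "inj_on (\<lambda>(y, x). x(Suc j := y)) (?Y \<times> hyp S j (U - {Suc j}) w)"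
    by (rule inj_on_subset[OF inj_on_fun_upd_Qk]) (auto simp: hyp_def)
  then have "(\<Sum>z\<in>hyp S (Suc j) U w. g z) =
      (\<Sum>(y, x)\<in>?Y \<times> hyp S j (U - {Suc j}) w. g (x(Suc j := y)))"
    unfolding hyp_Suc by (subst sum.reindex) (simp_all add: case_prod_beta)
  also have "\<dots> = (\<Sum>y\<in>?Y. \<Sum>x\<in>hyp S j (U - {Suc j}) w. g (x(Suc j := y)))"
    by (rule sum.cartesian_product[symmetric])
  also have "\<dots> = (\<Sum>x\<in>hyp S j (U - {Suc j}) w. \<Sum>y\<in>?Y. g (x(Suc j := y)))"
    by (rule sum.swap)
  finally show ?thesis .
qed

lemma prod_of_bool_eq:
  "finite A \<Longrightarrow> (\<Prod>x\<in>A. of_bool (P x) :: 'b::comm_semiring_1) = of_bool (\<forall>x\<in>A. P x)"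
  by (induction rule: finite_induct) auto

lemma Nk_memD: "F \<in> Nk \<F> k \<Longrightarrow> k \<in> F \<and> F \<subseteq> {1..k}"
  unfolding Nk_def by (cases k) (auto simp: atLeastAtMostSuc_conv)

lemma finite_Nk: "finite (Nk \<F> k)"
  by (rule finite_subset[of _ "Pow {1..k}"]) (auto simp: Nk_def)

lemma alpha_nonneg: "0 \<le> alpha S \<F> v k x"
  unfolding alpha_def by simp

lemma alpha_le_1: "finite (S k) \<Longrightarrow> alpha S \<F> v k x \<le> 1"
  unfolding alpha_def by (cases "card (S k) = 0") (auto simp: divide_le_eq intro!: card_mono)

lemma alpha_le_count_hyp:
  assumes x: "x \<in> Qk S m"
  shows "alpha S \<F> v (Suc m) x
    \<le> (\<Sum>F\<in>Nk \<F> (Suc m). of_bool (x \<in> hyp S m (F - {Suc m}) (v F))) / real (card (S (Suc m)))"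
proof -
  define G where "G = Nk \<F> (Suc m) \<inter> {F. x \<in> hyp S m (F - {Suc m}) (v F)}"
  have "{y \<in> S (Suc m). x(Suc m := y) \<in> Bk S \<F> v (Suc m)} \<subseteq> (\<lambda>F. v F (Suc m)) ` G"
  proof
    fix y assume y: "y \<in> {y \<in> S (Suc m). x(Suc m := y) \<in> Bk S \<F> v (Suc m)}"
    then obtain F where F: "F \<in> Nk \<F> (Suc m)" "x(Suc m := y) \<in> hyp S (Suc m) F (v F)"
      unfolding Bk_def by auto
    then have "y = v F (Suc m)" "F \<in> G"
      using Nk_memD[OF F(1)] fun_upd_in_hyp_Suc_iff[OF x] y by (auto simp: G_def)
    then show "y \<in> (\<lambda>F. v F (Suc m)) ` G" by blast
  qed
  moreover have "finite G" using finite_Nk by (simp add: G_def)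
  ultimately have "card {y \<in> S (Suc m). x(Suc m := y) \<in> Bk S \<F> v (Suc m)} \<le> card G"
    using card_mono card_image_le le_trans by (metis finite_imageI)
  then show ?thesis
    unfolding alpha_def using finite_Nk by (simp add: G_def divide_right_mono)
qed

lemma Qk_Int_hyp_subset:
  "\<exists>W. Qk S m \<inter> (\<Inter>i\<in>I. hyp S m (G i) (w i)) \<subseteq> hyp S m (\<Union>i\<in>I. G i) W"
proof
  let ?W = "\<lambda>l. w (SOME i. i \<in> I \<and> l \<in> G i) l"
  show "Qk S m \<inter> (\<Inter>i\<in>I. hyp S m (G i) (w i)) \<subseteq> hyp S m (\<Union>i\<in>I. G i) ?W"
  proof
    fix x assume "x \<in> Qk S m \<inter> (\<Inter>i\<in>I. hyp S m (G i) (w i))"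
    then have x: "x \<in> Qk S m" and on: "\<And>i l. i \<in> I \<Longrightarrow> l \<in> G i \<Longrightarrow> x l = w i l"
      by (auto simp: hyp_def)
    have "x l = ?W l" if "i \<in> I" "l \<in> G i" for i l
      using someI_ex[of "\<lambda>i. i \<in> I \<and> l \<in> G i"] that on by blast
    then show "x \<in> hyp S m (\<Union>i\<in>I. G i) ?W" using x by (simp add: hyp_def)
  qed
qed

lemma sum_weighted_alpha_power_le:
  assumes "\<And>x. x \<in> Qk S m \<Longrightarrow> 0 \<le> p x"
  shows "(\<Sum>x\<in>Qk S m. p x * alpha S \<F> v (Suc m) x ^ t)
    \<le> 1 / real (card (S (Suc m))) ^ t * (\<Sum>Fs\<in>PiE {..<t} (\<lambda>_. Nk \<F> (Suc m)).
         \<Sum>x\<in>Qk S m. p x * (\<Prod>i<t. of_bool (x \<in> hyp S m (Fs i - {Suc m}) (v (Fs i)))))"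
proof -
  let ?s = "real (card (S (Suc m)))"
  let ?on = "\<lambda>F x. of_bool (x \<in> hyp S m (F - {Suc m}) (v F)) :: real"
  have "alpha S \<F> v (Suc m) x ^ t
      \<le> 1 / ?s ^ t * (\<Sum>Fs\<in>PiE {..<t} (\<lambda>_. Nk \<F> (Suc m)). \<Prod>i<t. ?on (Fs i) x)"
    if "x \<in> Qk S m" for x
  proof -
    have "alpha S \<F> v (Suc m) x ^ t \<le> ((\<Sum>F\<in>Nk \<F> (Suc m). ?on F x) / ?s) ^ t"
      using alpha_le_count_hyp[OF that] alpha_nonneg by (rule power_mono)
    also have "\<dots> = 1 / ?s ^ t * (\<Prod>i<t. \<Sum>F\<in>Nk \<F> (Suc m). ?on F x)"
      by (simp add: power_divide)
    also have "(\<Prod>i<t. \<Sum>F\<in>Nk \<F> (Suc m). ?on F x)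
        = (\<Sum>Fs\<in>PiE {..<t} (\<lambda>_. Nk \<F> (Suc m)). \<Prod>i<t. ?on (Fs i) x)"
      by (rule prod_sum_PiE) (auto simp: finite_Nk)
    finally show ?thesis .
  qed
  then have "(\<Sum>x\<in>Qk S m. p x * alpha S \<F> v (Suc m) x ^ t) \<le> (\<Sum>x\<in>Qk S m. p x *
      (1 / ?s ^ t * (\<Sum>Fs\<in>PiE {..<t} (\<lambda>_. Nk \<F> (Suc m)). \<Prod>i<t. ?on (Fs i) x)))"
    using assms by (intro sum_mono mult_left_mono) auto
  also have "\<dots> = 1 / ?s ^ t * (\<Sum>Fs\<in>PiE {..<t} (\<lambda>_. Nk \<F> (Suc m)).
         \<Sum>x\<in>Qk S m. p x * (\<Prod>i<t. ?on (Fs i) x))"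
    by (simp add: sum_distrib_left mult.left_commute sum.swap[where A = "Qk S m"])
  finally show ?thesis .
qed

definition Pk_factor :: "real \<Rightarrow> real \<Rightarrow> bool \<Rightarrow> real" where
  "Pk_factor al d inB =
    (if inB then max 0 ((al - d) / (al * (1 - d))) else min (1 / (1 - al)) (1 / (1 - d)))"

lemma Pk_self: "Pk S \<F> v \<delta> a Pa a = Pa"
  by (cases a) auto

lemma Pk_Suc_fun_upd:
  assumes "a \<le> j" "x \<in> Qk S j"
  shows "Pk S \<F> v \<delta> a Pa (Suc j) (x(Suc j := y)) =
    Pk_factor (alpha S \<F> v (Suc j) x) (\<delta> (Suc j)) (x(Suc j := y) \<in> Bk S \<F> v (Suc j))
      * Pk S \<F> v \<delta> a Pa j x / real (card (S (Suc j)))"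
  using assms restrict_fun_upd_Qk[OF assms(2), of y] by (simp add: Pk_factor_def Let_def)

declare Pk.simps(2) [simp del]

context
  fixes al d :: real
  assumes al: "0 \<le> al" "al \<le> 1" and d: "0 \<le> d" "d < 1"
begin

lemma Pk_factor_nonneg: "0 \<le> Pk_factor al d inB"
  using al d by (simp add: Pk_factor_def)

lemma Pk_factor_le: "Pk_factor al d inB \<le> 1 / (1 - d)"
proof (cases "inB \<and> al \<noteq> 0")
  case True
  have "(al - d) / (al * (1 - d)) = ((al - d) / al) / (1 - d)" by simp
  also have "\<dots> \<le> 1 / (1 - d)"
    using True al d by (intro divide_right_mono) (auto simp: divide_le_eq)
  finally show ?thesis using True d by (simp add: Pk_factor_def)
qed (use d in \<open>auto simp: Pk_factor_def\<close>)

lemma Pk_factor_mean_le: "al * Pk_factor al d True + (1 - al) * Pk_factor al d False \<le> 1"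
proof (cases "al \<le> d")
  case True
  then have "al < 1" using d by simp
  have "(al - d) / (al * (1 - d)) \<le> 0"
    using True al d by (intro divide_nonpos_nonneg) auto
  moreover have "(1 - al) * min (1 / (1 - al)) (1 / (1 - d)) \<le> (1 - al) * (1 / (1 - al))"
    using \<open>al < 1\<close> by (intro mult_left_mono) auto
  ultimately show ?thesis using \<open>al < 1\<close> by (simp add: Pk_factor_def)
next
  case False
  then have "al * ((al - d) / (al * (1 - d))) = (al - d) / (1 - d)"
    using d by simp
  then have "al * ((al - d) / (al * (1 - d))) + (1 - al) * (1 / (1 - d)) = 1"
    using d by (simp add: field_simps)
  moreover have "(1 - al) * min (1 / (1 - al)) (1 / (1 - d)) \<le> (1 - al) * (1 / (1 - d))"
    using al by (intro mult_left_mono) auto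
  moreover have "0 \<le> (al - d) / (al * (1 - d))"
    using False al d by simp
  ultimately show ?thesis by (simp add: Pk_factor_def)
qed

end

locale Pk_construction =
  fixes S :: "nat \<Rightarrow> 'a set" and n a :: nat
    and \<F> :: "nat set set" and v :: "nat set \<Rightarrow> nat \<Rightarrow> 'a"
    and \<delta> :: "nat \<Rightarrow> real" and Pa :: "(nat \<Rightarrow> 'a) \<Rightarrow> real"
  assumes finite_S: "\<And>i. i \<in> {1..n} \<Longrightarrow> finite (S i)"
    and S_nonempty: "\<And>i. i \<in> {1..n} \<Longrightarrow> S i \<noteq> {}"
    and a_le_n: "a \<le> n"
    and Pa_nonneg: "\<And>x. x \<in> Qk S a \<Longrightarrow> 0 \<le> Pa x"
    and \<delta>_nonneg: "\<And>j. j \<in> {a+1..n} \<Longrightarrow> 0 \<le> \<delta> j"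
    and \<delta>_less_1: "\<And>j. j \<in> {a+1..n} \<Longrightarrow> \<delta> j < 1"
begin

abbreviation P :: "nat \<Rightarrow> (nat \<Rightarrow> 'a) \<Rightarrow> real" where
  "P \<equiv> Pk S \<F> v \<delta> a Pa"

lemma card_S_pos: "i \<in> {1..n} \<Longrightarrow> 0 < real (card (S i))"
  using finite_S S_nonempty by (simp add: card_gt_0_iff)

lemma finite_Qk: "j \<le> n \<Longrightarrow> finite (Qk S j)"
  unfolding Qk_def using finite_S by (intro finite_PiE) auto

lemma Pk_factor_bounds:
  assumes "a \<le> j" "Suc j \<le> n"
  shows "0 \<le> Pk_factor (alpha S \<F> v (Suc j) x) (\<delta> (Suc j)) inB"
    and "Pk_factor (alpha S \<F> v (Suc j) x) (\<delta> (Suc j)) inB \<le> 1 / (1 - \<delta> (Suc j))"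
    and "alpha S \<F> v (Suc j) x * Pk_factor (alpha S \<F> v (Suc j) x) (\<delta> (Suc j)) True
      + (1 - alpha S \<F> v (Suc j) x) * Pk_factor (alpha S \<F> v (Suc j) x) (\<delta> (Suc j)) False \<le> 1"
proof -
  have "0 \<le> alpha S \<F> v (Suc j) x" "alpha S \<F> v (Suc j) x \<le> 1"
    using assms by (simp_all add: alpha_nonneg alpha_le_1 finite_S)
  moreover have "0 \<le> \<delta> (Suc j)" "\<delta> (Suc j) < 1"
    using \<delta>_nonneg \<delta>_less_1 assms by auto
  ultimately show "0 \<le> Pk_factor (alpha S \<F> v (Suc j) x) (\<delta> (Suc j)) inB"
    and "Pk_factor (alpha S \<F> v (Suc j) x) (\<delta> (Suc j)) inB \<le> 1 / (1 - \<delta> (Suc j))"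
    and "alpha S \<F> v (Suc j) x * Pk_factor (alpha S \<F> v (Suc j) x) (\<delta> (Suc j)) True
      + (1 - alpha S \<F> v (Suc j) x) * Pk_factor (alpha S \<F> v (Suc j) x) (\<delta> (Suc j)) False \<le> 1"
    by (simp_all add: Pk_factor_nonneg Pk_factor_le Pk_factor_mean_le)
qed

lemma Pk_nonneg: "a \<le> j \<Longrightarrow> j \<le> n \<Longrightarrow> x \<in> Qk S j \<Longrightarrow> 0 \<le> P j x"
proof (induction j arbitrary: x rule: nat_induct_at_least)
  case base
  then show ?case by (simp add: Pk_self Pa_nonneg)
next
  case (Suc j)
  then obtain y x' where "x = x'(Suc j := y)" "x' \<in> Qk S j"
    unfolding Qk_Suc by auto
  with Suc show ?case
    unfolding \<open>x = x'(Suc j := y)\<close> Pk_Suc_fun_upd[OF \<open>a \<le> j\<close> \<open>x' \<in> Qk S j\<close>]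
    by (intro divide_nonneg_nonneg mult_nonneg_nonneg Pk_factor_bounds(1)) auto
qed

lemma Pk_Suc_le:
  assumes "a \<le> j" "Suc j \<le> n" "x \<in> Qk S j"
  shows "P (Suc j) (x(Suc j := y)) \<le> P j x / ((1 - \<delta> (Suc j)) * real (card (S (Suc j))))"
proof -
  have "P (Suc j) (x(Suc j := y)) \<le> 1 / (1 - \<delta> (Suc j)) * P j x / real (card (S (Suc j)))"
    unfolding Pk_Suc_fun_upd[OF assms(1,3)] using assms Pk_nonneg[of j x]
    by (intro divide_right_mono mult_right_mono Pk_factor_bounds(2)) auto
  then show ?thesis by simp
qed

lemma sum_Pk_Suc_fiber_le:
  assumes "a \<le> j" "Suc j \<le> n" "x \<in> Qk S j"
  shows "(\<Sum>y\<in>S (Suc j). P (Suc j) (x(Suc j := y))) \<le> P j x"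
proof -
  let ?al = "alpha S \<F> v (Suc j) x" and ?s = "real (card (S (Suc j)))"
  let ?f = "Pk_factor ?al (\<delta> (Suc j))"
  define B where "B = {y \<in> S (Suc j). x(Suc j := y) \<in> Bk S \<F> v (Suc j)}"
  have fin: "finite (S (Suc j))" and s: "0 < ?s"
    using finite_S card_S_pos assms by auto
  have B: "B \<subseteq> S (Suc j)" "real (card B) = ?al * ?s"
    using s unfolding alpha_def B_def by auto
  then have notB: "real (card (S (Suc j) - B)) = (1 - ?al) * ?s"
    using fin by (simp add: card_Diff_subset card_mono of_nat_diff finite_subset algebra_simps)
  have "(\<Sum>y\<in>S (Suc j). P (Suc j) (x(Suc j := y)))
      = (\<Sum>y\<in>S (Suc j). ?f (y \<in> B) * P j x / ?s)"
    using assms by (intro sum.cong) (simp_all add: Pk_Suc_fun_upd B_def)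
  also have "\<dots> = (\<Sum>y\<in>S (Suc j) - B. ?f (y \<in> B) * P j x / ?s)
      + (\<Sum>y\<in>B. ?f (y \<in> B) * P j x / ?s)"
    by (rule sum.subset_diff[OF B(1) fin])
  also have "\<dots> = real (card (S (Suc j) - B)) * (?f False * P j x / ?s)
      + real (card B) * (?f True * P j x / ?s)"
    by simp
  also have "\<dots> = (?al * ?f True + (1 - ?al) * ?f False) * P j x"
    unfolding notB B(2) using s by (simp add: field_simps)
  also have "\<dots> \<le> 1 * P j x"
    using assms Pk_nonneg[of j x] by (intro mult_right_mono Pk_factor_bounds(3)) auto
  finally show ?thesis by simp
qed

lemma sum_hyp_Pa_le_cI:
  assumes "U \<subseteq> {1..a}"
  shows "(\<Sum>x\<in>hyp S a U w. Pa x) \<le> cI S a Pa U"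
proof -
  let ?mass = "\<lambda>w. \<Sum>x\<in>hyp S a U w. Pa x"
  have fin: "finite (?mass ` PiE U S)"
    using assms a_le_n finite_S finite_subset[OF assms] by (intro finite_imageI finite_PiE) auto
  show ?thesis
  proof (cases "restrict w U \<in> PiE U S")
    case True
    have "hyp S a U w = hyp S a U (restrict w U)" unfolding hyp_def by auto
    then show ?thesis unfolding cI_def using True fin by (auto intro!: Max_ge)
  next
    case False
    then obtain i where i: "i \<in> U" "w i \<notin> S i" by (auto simp: PiE_def Pi_def)
    have "i \<in> {1..a}" using i(1) assms by blast
    then have "x i \<noteq> w i" if "x \<in> Qk S a" for x
      using that i(2) PiE_mem[of x "{1..a}" S i] by (auto simp: Qk_def)
    then have "hyp S a U w = {}"
      using i(1) by (auto simp: hyp_def)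
    have "PiE U S \<noteq> {}"
      using S_nonempty assms a_le_n by (force simp: PiE_eq_empty_iff)
    then obtain w0 where w0: "w0 \<in> PiE U S" by blast
    have "0 \<le> ?mass w0"
      using Pa_nonneg hyp_subset_Qk by (intro sum_nonneg) blast
    also have "\<dots> \<le> cI S a Pa U"
      unfolding cI_def using fin w0 by (intro Max_ge) auto
    finally show ?thesis using \<open>hyp S a U w = {}\<close> by simp
  qed
qed

lemma sum_hyp_Pk_Suc_fixed_le:
  assumes "a \<le> j" "Suc j \<le> n" "Suc j \<in> U"
  shows "(\<Sum>z\<in>hyp S (Suc j) U w. P (Suc j) z)
    \<le> (\<Sum>x\<in>hyp S j (U - {Suc j}) w. P j x) / ((1 - \<delta> (Suc j)) * real (card (S (Suc j))))"
proof -
  let ?c = "(1 - \<delta> (Suc j)) * real (card (S (Suc j)))"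
  let ?Y = "{y \<in> S (Suc j). Suc j \<in> U \<longrightarrow> y = w (Suc j)}"
  have "card ?Y \<le> 1"
    using assms(3) card_mono[of "{w (Suc j)}" ?Y] by auto
  have "(\<Sum>y\<in>?Y. P (Suc j) (x(Suc j := y))) \<le> P j x / ?c"
    if x: "x \<in> hyp S j (U - {Suc j}) w" for x
  proof -
    have "x \<in> Qk S j" using x hyp_subset_Qk by blast
    have "(\<Sum>y\<in>?Y. P (Suc j) (x(Suc j := y))) \<le> real (card ?Y) * (P j x / ?c)"
      using assms \<open>x \<in> Qk S j\<close> by (intro sum_bounded_above Pk_Suc_le)
    also have "\<dots> \<le> P j x / ?c"
      using \<open>card ?Y \<le> 1\<close> Pk_nonneg[of j x] \<delta>_less_1[of "Suc j"] assms \<open>x \<in> Qk S j\<close>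
      by (intro mult_left_le_one_le divide_nonneg_nonneg) auto
    finally show ?thesis .
  qed
  then have "(\<Sum>z\<in>hyp S (Suc j) U w. P (Suc j) z) \<le> (\<Sum>x\<in>hyp S j (U - {Suc j}) w. P j x / ?c)"
    unfolding sum_hyp_Suc by (rule sum_mono)
  then show ?thesis by (simp add: sum_divide_distrib)
qed

lemma sum_hyp_Pk_Suc_free_le:
  assumes "a \<le> j" "Suc j \<le> n" "Suc j \<notin> U"
  shows "(\<Sum>z\<in>hyp S (Suc j) U w. P (Suc j) z) \<le> (\<Sum>x\<in>hyp S j U w. P j x)"
proof -
  have "(\<Sum>z\<in>hyp S (Suc j) U w. P (Suc j) z) =
      (\<Sum>x\<in>hyp S j U w. \<Sum>y\<in>S (Suc j). P (Suc j) (x(Suc j := y)))"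
    using assms(3) by (simp add: sum_hyp_Suc)
  also have "\<dots> \<le> (\<Sum>x\<in>hyp S j U w. P j x)"
    using assms hyp_subset_Qk by (intro sum_mono sum_Pk_Suc_fiber_le) blast+
  finally show ?thesis .
qed

lemma sum_hyp_Pk_le:
  "a \<le> j \<Longrightarrow> j \<le> n \<Longrightarrow> U \<subseteq> {1..j} \<Longrightarrow>
    (\<Sum>x\<in>hyp S j U w. P j x) \<le> cI S a Pa (U \<inter> {1..a}) * nu S \<delta> (U \<inter> {a+1..j})"
proof (induction j arbitrary: U rule: nat_induct_at_least)
  case base
  then show ?case by (simp add: Pk_self sum_hyp_Pa_le_cI Int_absorb2 nu_def)
next
  case (Suc j)
  have same_c: "(U - {Suc j}) \<inter> {1..a} = U \<inter> {1..a}" using Suc.hyps by auto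
  have "j \<le> n" "U - {Suc j} \<subseteq> {1..j}" using Suc.prems by auto
  from Suc.IH[OF this] have IH: "(\<Sum>x\<in>hyp S j (U - {Suc j}) w. P j x)
      \<le> cI S a Pa (U \<inter> {1..a}) * nu S \<delta> ((U - {Suc j}) \<inter> {a+1..j})"
    unfolding same_c .
  show ?case
  proof (cases "Suc j \<in> U")
    case True
    let ?c = "(1 - \<delta> (Suc j)) * real (card (S (Suc j)))"
    have "?c > 0" using \<delta>_less_1[of "Suc j"] card_S_pos[of "Suc j"] Suc.hyps Suc.prems by auto
    have "U \<inter> {a+1..Suc j} = insert (Suc j) ((U - {Suc j}) \<inter> {a+1..j})"
      using True Suc.hyps by auto
    then have nu_eq: "nu S \<delta> (U \<inter> {a+1..Suc j}) = nu S \<delta> ((U - {Suc j}) \<inter> {a+1..j}) / ?c"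
      by (simp add: nu_def)
    have "(\<Sum>z\<in>hyp S (Suc j) U w. P (Suc j) z) \<le> (\<Sum>x\<in>hyp S j (U - {Suc j}) w. P j x) / ?c"
      using Suc True by (intro sum_hyp_Pk_Suc_fixed_le) auto
    also have "\<dots> \<le> cI S a Pa (U \<inter> {1..a}) * nu S \<delta> ((U - {Suc j}) \<inter> {a+1..j}) / ?c"
      using IH \<open>?c > 0\<close> by (intro divide_right_mono) auto
    also have "\<dots> = cI S a Pa (U \<inter> {1..a}) * nu S \<delta> (U \<inter> {a+1..Suc j})"
      unfolding nu_eq by simp
    finally show ?thesis .
  next
    case False
    have "(\<Sum>z\<in>hyp S (Suc j) U w. P (Suc j) z) \<le> (\<Sum>x\<in>hyp S j (U - {Suc j}) w. P j x)"
      using Suc.hyps Suc.prems False by (simp add: sum_hyp_Pk_Suc_free_le)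
    also have "\<dots> \<le> cI S a Pa (U \<inter> {1..a}) * nu S \<delta> ((U - {Suc j}) \<inter> {a+1..j})"
      by (rule IH)
    also have "(U - {Suc j}) \<inter> {a+1..j} = U \<inter> {a+1..Suc j}"
      using False by (auto simp: le_Suc_eq)
    finally show ?thesis .
  qed
qed

lemma sum_Pk_common_points_le:
  fixes t :: nat
  assumes "a \<le> m" "Suc m \<le> n" "Fs \<in> PiE {..<t} (\<lambda>_. Nk \<F> (Suc m))"
  shows "(\<Sum>x\<in>Qk S m. P m x * (\<Prod>i<t. of_bool (x \<in> hyp S m (Fs i - {Suc m}) (v (Fs i)))))
    \<le> cI S a Pa ((\<Union>i<t. Fs i) \<inter> {1..a}) * nu S \<delta> ((\<Union>i<t. Fs i) \<inter> {a+1..m})"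
proof -
  let ?U = "\<Union>i<t. Fs i - {Suc m}"
  obtain W where W: "Qk S m \<inter> (\<Inter>i<t. hyp S m (Fs i - {Suc m}) (v (Fs i))) \<subseteq> hyp S m ?U W"
    using Qk_Int_hyp_subset[where I = "{..<t}" and G = "\<lambda>i. Fs i - {Suc m}"
        and w = "\<lambda>i. v (Fs i)"]
    by blast
  have "?U \<subseteq> {1..m}"
  proof
    fix l assume "l \<in> ?U"
    then obtain i where i: "i < t" "l \<in> Fs i" "l \<noteq> Suc m" by blast
    then have "Fs i \<in> Nk \<F> (Suc m)" using assms(3) by (simp add: PiE_iff)
    then show "l \<in> {1..m}" using Nk_memD i by fastforce
  qed
  have "(\<Prod>i<t. of_bool (x \<in> hyp S m (Fs i - {Suc m}) (v (Fs i))))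
      \<le> (of_bool (x \<in> hyp S m ?U W) :: real)"
    if "x \<in> Qk S m" for x
  proof -
    have "(\<Prod>i<t. of_bool (x \<in> hyp S m (Fs i - {Suc m}) (v (Fs i))))
        = (of_bool (\<forall>i\<in>{..<t}. x \<in> hyp S m (Fs i - {Suc m}) (v (Fs i))) :: real)"
      by (rule prod_of_bool_eq) simp
    then show ?thesis using W that by auto
  qed
  then have "(\<Sum>x\<in>Qk S m. P m x * (\<Prod>i<t. of_bool (x \<in> hyp S m (Fs i - {Suc m}) (v (Fs i)))))
      \<le> (\<Sum>x\<in>Qk S m. P m x * of_bool (x \<in> hyp S m ?U W))"
    using Pk_nonneg assms by (intro sum_mono mult_left_mono) auto
  also have "\<dots> = (\<Sum>x\<in>hyp S m ?U W. P m x)"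
    using hyp_subset_Qk[of S m ?U W] finite_Qk[of m] assms(2)
    by (simp add: sum_mult_of_bool_eq Int_absorb1)
  also have "\<dots> \<le> cI S a Pa (?U \<inter> {1..a}) * nu S \<delta> (?U \<inter> {a+1..m})"
    using assms \<open>?U \<subseteq> {1..m}\<close> by (intro sum_hyp_Pk_le) auto
  also have "?U \<inter> {1..a} = (\<Union>i<t. Fs i) \<inter> {1..a}"
    using assms(1) by auto
  also have "?U \<inter> {a+1..m} = (\<Union>i<t. Fs i) \<inter> {a+1..m}"
    by auto
  finally show ?thesis .
qed

end

theorem lemma3p4:
  fixes S :: "nat \<Rightarrow> 'a set" and n a k t :: nat
    and \<F> :: "nat set set" and v :: "nat set \<Rightarrow> nat \<Rightarrow> 'a"
    and \<delta> :: "nat \<Rightarrow> real" and Pa :: "(nat \<Rightarrow> 'a) \<Rightarrow> real"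
  assumes S: "\<And>i. i \<in> {1..n} \<Longrightarrow> finite (S i) \<and> card (S i) \<ge> 2"
    and F: "\<And>F. F \<in> \<F> \<Longrightarrow> F \<noteq> {} \<and> F \<subseteq> {1..n}"
    and v: "\<And>F i. F \<in> \<F> \<Longrightarrow> i \<in> F \<Longrightarrow> v F i \<in> S i"
    and a: "a \<le> n"
    and Pa_nonneg: "\<And>x. x \<in> Qk S a \<Longrightarrow> Pa x \<ge> 0"
    and Pa_sum: "(\<Sum>x\<in>Qk S a. Pa x) = 1"
    and \<delta>: "\<And>j. j \<in> {a+1..n} \<Longrightarrow> 0 \<le> \<delta> j \<and> \<delta> j \<le> 1/2"
    and k: "a < k" "k \<le> n"
  shows "(\<Sum>x\<in>Qk S (k-1). Pk S \<F> v \<delta> a Pa (k-1) x * alpha S \<F> v k x ^ t)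
     \<le> 1 / real (card (S k)) ^ t *
       (\<Sum>Fs\<in>PiE {..<t} (\<lambda>_. Nk \<F> k).
          cI S a Pa ((\<Union>i<t. Fs i) \<inter> {1..a}) * nu S \<delta> ((\<Union>i<t. Fs i) \<inter> {a+1..k-1}))"
proof -
  interpret Pk_construction S n a \<F> v \<delta> Pa
    using S a Pa_nonneg \<delta> by unfold_locales fastforce+
  obtain m where m: "k = Suc m" "a \<le> m" using k by (cases k) auto
  have "(\<Sum>x\<in>Qk S m. P m x * alpha S \<F> v (Suc m) x ^ t)
      \<le> 1 / real (card (S (Suc m))) ^ t * (\<Sum>Fs\<in>PiE {..<t} (\<lambda>_. Nk \<F> (Suc m)).
         \<Sum>x\<in>Qk S m. P m x * (\<Prod>i<t. of_bool (x \<in> hyp S m (Fs i - {Suc m}) (v (Fs i)))))"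
    using Pk_nonneg k m by (intro sum_weighted_alpha_power_le) auto
  also have "\<dots> \<le> 1 / real (card (S (Suc m))) ^ t * (\<Sum>Fs\<in>PiE {..<t} (\<lambda>_. Nk \<F> (Suc m)).
      cI S a Pa ((\<Union>i<t. Fs i) \<inter> {1..a}) * nu S \<delta> ((\<Union>i<t. Fs i) \<inter> {a+1..m}))"
    using k m by (intro mult_left_mono sum_mono sum_Pk_common_points_le) auto
  finally show ?thesis using m by simp
qed

end
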